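(* Let $e\geqslant 1$ be an integer and $b\geqslant 2$ an even integer, and let $D_{e,b}$ be the cycle set for $T_{e,b}$. Assume there exists a positive integer $h$ such that $h+x$ is $(e,b)$-happy for every $x\in D_{e,b}$. Then for every positive integer $m$ there exists a positive integer $l$ such that $l+1,l+2,\ldots,l+m$ are all $(e,b)$-happy.
   Context: For a positive integer $n=\sum_{j=0}^k a_j b^j$ with $0\leqslant a_j<b$, $T_{e,b}(n)=\sum_{j=0}^k a_j^e$; $T_{e,b}^r$ is the $r$-th iterate, $T_{e,b}^0(n)=n$. A positive integer $n$ is $(e,b)$-happy if $T_{e,b}^r(n)=1$ for some $r\geqslant 0$. A set $D_{e,b}$ of positive integers is a cycle set for $T_{e,b}$ if (1) for every positive integer $n$ there is $r\geqslant 0$ with $T_{e,b}^r(n)\in D_{e,b}$; (2) $T_{e,b}(x)\in D_{e,b}$ for all $x\in D_{e,b}$; (3) for every $x\in D_{e,b}$ there is $r\geqslant 1$ with $T_{e,b}^r(x)=x$. Such a set is finite and uniquely determined by $e,b$ (it is the set of positive integers $x$ with $T_{e,b}^r(x)=x$ for some $r\geqslant1$). *)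

theory Defs
  imports Main
begin

function digits :: "nat \<Rightarrow> nat \<Rightarrow> nat list" where
  "digits b n = (if n = 0 \<or> b < 2 then [] else (n mod b) # digits b (n div b))"
  by auto
termination by (relation "measure (\<lambda>(b, n). n)") auto

definition T :: "nat \<Rightarrow> nat \<Rightarrow> nat \<Rightarrow> nat" where
  "T e b n = sum_list (map (\<lambda>a. a ^ e) (digits b n))"

definition happy :: "nat \<Rightarrow> nat \<Rightarrow> nat \<Rightarrow> bool" where
  "happy e b n \<longleftrightarrow> n > 0 \<and> (\<exists>r. (T e b ^^ r) n = 1)"

definition cycle_set :: "nat \<Rightarrow> nat \<Rightarrow> nat set" where
  "cycle_set e b = {x. x > 0 \<and> (\<exists>r\<ge>1. (T e b ^^ r) x = x)}"

end

theory Submission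
  imports Defs
begin

text \<open>
  Since \<open>2 T(n) \<le> n + K\<close> for a constant \<open>K\<close>, every orbit of \<open>T\<close> is bounded and hence
  enters the cycle set \<open>D\<close>, which it never leaves; so for finite \<open>S\<close> one iterate \<open>T^r\<close> maps
  all of \<open>S\<close> into \<open>D\<close>, where the translate \<open>h\<close> makes everything happy.  Good translates
  are pulled back along \<open>T\<close>: if all \<open>y + T(s)\<close>, \<open>s \<in> S\<close>, are happy and \<open>S \<subseteq> [0, b^k)\<close>,
  take \<open>l = (1 + b + \<dots> + b^(y-1)) b^k\<close>.  The digits of \<open>l + s\<close> are those of \<open>s\<close>, padded
  with zeros, followed by \<open>y\<close> ones, so \<open>T(l + s) = y + T(s)\<close> and \<open>l + s\<close> is happy.
\<close>

lemma T_zero [simp]: "T e b 0 = 0"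
  unfolding T_def by simp

lemma T_eq:
  assumes "b \<ge> 2" "n > 0"
  shows "T e b n = (n mod b) ^ e + T e b (n div b)"
  unfolding T_def using assms by (subst digits.simps) auto

lemma T_eq_pos_exp:
  assumes "b \<ge> 2" "e \<ge> 1"
  shows "T e b n = (n mod b) ^ e + T e b (n div b)"
  using assms T_eq[OF assms(1)] by (cases "n = 0") simp_all

lemma T_pos:
  assumes "b \<ge> 2" "n > 0"
  shows "T e b n > 0"
  using assms(2)
proof (induction n rule: less_induct)
  case (less n)
  show ?case
  proof (cases "n mod b = 0")
    case True
    then have "b \<le> n" using less.prems by (auto intro: dvd_imp_le)
    then have "0 < n div b" "n div b < n"
      using assms(1) less.prems by (simp_all add: div_greater_zero_iff)
    then show ?thesis using less.IH T_eq[OF assms(1) less.prems] by simp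
  next
    case False
    then show ?thesis using T_eq[OF assms(1) less.prems] by simp
  qed
qed

lemma T_le_mult:
  assumes "b \<ge> 2"
  shows "T e b n \<le> (b - 1) ^ e * n"
proof (induction n rule: less_induct)
  case (less n)
  show ?case
  proof (cases "n = 0")
    case False
    have q: "n div b < n" using False assms by simp
    have "(n mod b) ^ e \<le> (b - 1) ^ e"
      using assms by (intro power_mono) (auto simp: less_Suc_eq_le[symmetric])
    then have "T e b n \<le> (b - 1) ^ e + (b - 1) ^ e * (n div b)"
      using T_eq[OF assms] False less.IH[OF q] by simp
    also have "\<dots> \<le> (b - 1) ^ e * n"
      using q by (subst mult_Suc_right[symmetric]) (intro mult_le_mono2, simp)
    finally show ?thesis .
  qed simp
qed

lemma double_T_le:
  fixes e b n :: nat
  assumes "b \<ge> 2"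
  defines "c \<equiv> (b - 1) ^ e"
  shows "2 * T e b n \<le> n + 2 * c * ((2 * c + 1) * b)"
proof (induction n rule: less_induct)
  case (less n)
  show ?case
  proof (cases "n < (2 * c + 1) * b")
    case True
    have "T e b n \<le> c * n" using T_le_mult[OF assms(1)] c_def by simp
    also have "\<dots> \<le> c * ((2 * c + 1) * b)" using True by simp
    finally show ?thesis by simp
  next
    case False
    then have n0: "n > 0" using assms by (auto intro: Nat.gr0I)
    have q: "n div b < n" using n0 assms by simp
    have "(2 * c + 1) * b div b \<le> n div b" using False by (intro div_le_mono) simp
    then have qb: "2 * c + 1 \<le> n div b" using assms by simp
    have d: "(n mod b) ^ e \<le> c"
      unfolding c_def using assms by (intro power_mono) (auto simp: less_Suc_eq_le[symmetric])
    have "2 * (n div b) \<le> b * (n div b)" using assms by simp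
    also have "\<dots> \<le> n" by simp
    finally have "2 * (n div b) \<le> n" .
    then show ?thesis using T_eq[OF assms(1) n0, of e] d less.IH[OF q] qb by linarith
  qed
qed

lemma T_le_max:
  assumes "b \<ge> 2"
  obtains K where "\<And>n. T e b n \<le> max n K"
proof
  fix n
  show "T e b n \<le> max n (2 * (b - 1) ^ e * ((2 * (b - 1) ^ e + 1) * b))"
    using double_T_le[OF assms, of e n] by linarith
qed

lemma funpow_le_max:
  fixes f :: "nat \<Rightarrow> nat"
  assumes "\<And>n. f n \<le> max n K"
  shows "(f ^^ r) s \<le> max s K"
proof (induction r)
  case (Suc r)
  have "(f ^^ Suc r) s \<le> max ((f ^^ r) s) K" using assms by simp
  also have "\<dots> \<le> max s K" using Suc.IH by simp
  finally show ?case .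
qed simp

lemma funpow_periodic_point:
  assumes "(f ^^ p) x = x"
  shows "(f ^^ p) ((f ^^ r) x) = (f ^^ r) x"
  by (metis assms add.commute comp_apply funpow_add)

lemma finite_orbit_periodic:
  assumes "finite (range (\<lambda>r. (f ^^ r) s))"
  obtains i p where "p > 0" "(f ^^ p) ((f ^^ i) s) = (f ^^ i) s"
proof -
  have "\<not> inj (\<lambda>r. (f ^^ r) s)" using assms finite_imageD by blast
  then obtain i j where "i < j" "(f ^^ i) s = (f ^^ j) s"
    unfolding inj_def by (metis linorder_neqE_nat)
  then have "(f ^^ (j - i)) ((f ^^ i) s) = (f ^^ i) s"
    by (metis funpow_add le_add_diff_inverse2 less_imp_le_nat o_apply)
  then show ?thesis using that \<open>i < j\<close> zero_less_diff by blast
qed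

lemma funpow_T_pos:
  assumes "b \<ge> 2" "n > 0"
  shows "(T e b ^^ r) n > 0"
  by (induction r) (simp_all add: assms T_pos)

lemma funpow_T_mem_cycle_set:
  assumes "b \<ge> 2" "x \<in> cycle_set e b"
  shows "(T e b ^^ r) x \<in> cycle_set e b"
proof -
  obtain p where p: "p \<ge> 1" "(T e b ^^ p) x = x" and "x > 0"
    using assms(2) unfolding cycle_set_def by blast
  have "(T e b ^^ r) x > 0" using funpow_T_pos[OF assms(1) \<open>x > 0\<close>] .
  moreover have "(T e b ^^ p) ((T e b ^^ r) x) = (T e b ^^ r) x"
    using funpow_periodic_point[OF p(2)] .
  ultimately show ?thesis using p(1) unfolding cycle_set_def by blast
qed

lemma reaches_cycle_set:
  assumes "b \<ge> 2" "s > 0"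
  obtains i where "(T e b ^^ i) s \<in> cycle_set e b"
proof -
  obtain K where "\<And>n. T e b n \<le> max n K" using T_le_max[OF assms(1)] by blast
  then have "range (\<lambda>r. (T e b ^^ r) s) \<subseteq> {..max s K}" using funpow_le_max by auto
  then have "finite (range (\<lambda>r. (T e b ^^ r) s))" using finite_subset by blast
  then obtain i p where "p > 0" "(T e b ^^ p) ((T e b ^^ i) s) = (T e b ^^ i) s"
    by (rule finite_orbit_periodic)
  moreover have "(T e b ^^ i) s > 0" using funpow_T_pos[OF assms] .
  ultimately show ?thesis using that unfolding cycle_set_def by (auto intro: Suc_leI)
qed

lemma funpow_image_subset_cycle_set:
  assumes "b \<ge> 2" "finite S" "0 \<notin> S"
  shows "\<exists>r. (T e b ^^ r) ` S \<subseteq> cycle_set e b"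
  using assms(2,3)
proof (induction S rule: finite_induct)
  case (insert x S)
  obtain r where r: "(T e b ^^ r) ` S \<subseteq> cycle_set e b" using insert.IH insert.prems by blast
  have "x > 0" using insert.prems by auto
  then obtain i where i: "(T e b ^^ i) x \<in> cycle_set e b" by (rule reaches_cycle_set[OF assms(1)])
  have "(T e b ^^ (r + i)) x = (T e b ^^ r) ((T e b ^^ i) x)" by (simp add: funpow_add)
  then have "(T e b ^^ (r + i)) x \<in> cycle_set e b" using funpow_T_mem_cycle_set[OF assms(1) i] by simp
  moreover have "(T e b ^^ (r + i)) s \<in> cycle_set e b" if "s \<in> S" for s
  proof -
    have "(T e b ^^ (r + i)) s = (T e b ^^ i) ((T e b ^^ r) s)"
      by (metis add.commute comp_apply funpow_add)
    then show ?thesis using funpow_T_mem_cycle_set[OF assms(1)] r that by auto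
  qed
  ultimately show ?case by blast
qed simp

definition repunit :: "nat \<Rightarrow> nat \<Rightarrow> nat" where
  "repunit b y = (\<Sum>j<y. b ^ j)"

lemma repunit_pos: "y > 0 \<Longrightarrow> repunit b y > 0"
  unfolding repunit_def by (metis lessThan_iff power_0 sum_pos2 finite_lessThan zero_le zero_less_one)

lemma T_repunit:
  assumes "b \<ge> 2"
  shows "T e b (repunit b y) = y"
proof (induction y)
  case (Suc y)
  have eq: "repunit b (Suc y) = 1 + b * repunit b y"
    unfolding repunit_def
    by (simp add: sum.lessThan_Suc_shift sum_distrib_left del: sum.lessThan_Suc)
  have "(1 + b * repunit b y) mod b = 1"
    using assms by (simp only: mod_mult_self2) simp
  moreover have "(1 + b * repunit b y) div b = repunit b y"
    using assms by (subst div_mult_self2) auto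
  ultimately show ?case using assms Suc.IH by (simp add: eq T_eq del: One_nat_def)
qed (simp add: repunit_def)

lemma T_add_shifted:
  assumes "b \<ge> 2" "e \<ge> 1"
  shows "s < b ^ k \<Longrightarrow> T e b (A * b ^ k + s) = T e b A + T e b s"
proof (induction k arbitrary: s)
  case (Suc k)
  have "A * b ^ Suc k + s = s mod b + (A * b ^ k + s div b) * b"
    by (simp add: algebra_simps)
  moreover have "s div b < b ^ k"
    using Suc.prems assms(1) by (simp add: div_less_iff_less_mult mult.commute)
  ultimately show ?case
    using Suc.IH assms T_eq_pos_exp[OF assms, of "A * b ^ Suc k + s"] T_eq_pos_exp[OF assms, of s]
    by simp
qed simp

definition happy_translatable :: "nat \<Rightarrow> nat \<Rightarrow> nat set \<Rightarrow> bool" where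
  "happy_translatable e b S \<longleftrightarrow> (\<exists>y>0. \<forall>s\<in>S. happy e b (y + s))"

lemma happy_if_happy_T:
  assumes "n > 0" "happy e b (T e b n)"
  shows "happy e b n"
  using assms unfolding happy_def by (metis funpow_Suc_right o_apply)

lemma happy_translatable_if_image_T:
  assumes "b \<ge> 2" "e \<ge> 1" "finite S" "happy_translatable e b (T e b ` S)"
  shows "happy_translatable e b S"
proof -
  obtain y where y: "y > 0" "\<forall>s\<in>S. happy e b (y + T e b s)"
    using assms(4) unfolding happy_translatable_def by auto
  define k where "k = Max (insert 0 S)"
  have below: "s < b ^ k" if "s \<in> S" for s
  proof -
    have "s \<le> k" unfolding k_def using assms(3) that by simp
    have "s < 2 ^ s" by (rule less_exp)
    also have "\<dots> \<le> b ^ s" using assms(1) by (intro power_mono) simp_all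
    also have "\<dots> \<le> b ^ k" using assms(1) \<open>s \<le> k\<close> by (intro power_increasing) simp_all
    finally show ?thesis .
  qed
  define l where "l = repunit b y * b ^ k"
  have "l > 0" unfolding l_def using repunit_pos[OF y(1)] assms(1) by simp
  have "happy e b (l + s)" if "s \<in> S" for s
  proof -
    have "T e b (l + s) = y + T e b s"
      unfolding l_def T_add_shifted[OF assms(1,2) below[OF that]] T_repunit[OF assms(1)] ..
    then have "happy e b (T e b (l + s))" using y(2) that by simp
    then show ?thesis using \<open>l > 0\<close> by (simp add: happy_if_happy_T)
  qed
  then show ?thesis unfolding happy_translatable_def using \<open>l > 0\<close> by blast
qed

lemma happy_translatable_if_funpow_image:
  assumes "b \<ge> 2" "e \<ge> 1" "finite S" "happy_translatable e b ((T e b ^^ r) ` S)"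
  shows "happy_translatable e b S"
  using assms(3,4)
proof (induction r arbitrary: S)
  case (Suc r)
  have "happy_translatable e b ((T e b ^^ r) ` T e b ` S)"
    using Suc.prems(2) by (simp only: funpow_Suc_right image_comp)
  moreover have "finite (T e b ` S)" using Suc.prems(1) by simp
  ultimately have "happy_translatable e b (T e b ` S)" by (rule Suc.IH[rotated])
  then show ?case by (rule happy_translatable_if_image_T[OF assms(1,2) Suc.prems(1)])
qed simp

theorem corollary2p1:
  fixes e b :: nat
  assumes "e \<ge> 1" and "b \<ge> 2" and "even b"
    and "\<exists>h>0. \<forall>x\<in>cycle_set e b. happy e b (h + x)"
  shows "\<forall>m>0. \<exists>l>0. \<forall>i\<in>{1..m}. happy e b (l + i)"
proof (intro allI impI)
  fix m :: nat
  obtain r where "(T e b ^^ r) ` {1..m} \<subseteq> cycle_set e b"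
    using funpow_image_subset_cycle_set[OF assms(2) finite_atLeastAtMost, of 1 m] by auto
  then have "happy_translatable e b ((T e b ^^ r) ` {1..m})"
    using assms(4) unfolding happy_translatable_def by blast
  then have "happy_translatable e b {1..m}"
    by (rule happy_translatable_if_funpow_image[OF assms(2,1) finite_atLeastAtMost])
  then show "\<exists>l>0. \<forall>i\<in>{1..m}. happy e b (l + i)"
    unfolding happy_translatable_def by blast
qed

end
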